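(* Let $X$ be a $T_1$ space and $\mathcal{P}$ an ideal of closed subsets of $X$. If $X$ is $\tau\mathcal{P}$-compact, then $X$ is $\tau\mathcal{P}$-pseudocompact.
   Context: An ideal of closed subsets of $X$ is a family $\mathcal{P}$ of closed subsets closed under finite unions and under passing to closed subsets. For $f\in\mathbb{R}^X$, $D_f$ is the set of discontinuity points of $f$; $C(X)_\mathcal{P}=\{f\in\mathbb{R}^X\colon\overline{D_f}\in\mathcal{P}\}$ and $C^*(X)_\mathcal{P}$ is the set of bounded members of $C(X)_\mathcal{P}$. For $f\in C(X)_\mathcal{P}$, $Z_\mathcal{P}(f)=\{x\colon f(x)=0\}$, and $Z_\mathcal{P}[X]$ is the set of all such zero sets. $X$ is $\tau\mathcal{P}$-compact if every family $\mathcal{F}\subseteq Z_\mathcal{P}[X]$ with the finite intersection property has nonempty intersection. $X$ is $\tau\mathcal{P}$-pseudocompact if $C(X)_\mathcal{P}=C^*(X)_\mathcal{P}$. *)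

theory Defs
  imports "HOL-Analysis.Analysis"
begin

text \<open>Functions X \<rightarrow> R are modelled as 'a \<Rightarrow> real; only values on topspace X matter.\<close>

definition continuous_at_pt :: "'a topology \<Rightarrow> ('a \<Rightarrow> real) \<Rightarrow> 'a \<Rightarrow> bool" where
  "continuous_at_pt X f x \<longleftrightarrow>
     (\<forall>V. open V \<and> f x \<in> V \<longrightarrow> (\<exists>U. openin X U \<and> x \<in> U \<and> f ` U \<subseteq> V))"

definition discont_pts :: "'a topology \<Rightarrow> ('a \<Rightarrow> real) \<Rightarrow> 'a set" where
  "discont_pts X f = {x \<in> topspace X. \<not> continuous_at_pt X f x}"

definition closed_ideal :: "'a topology \<Rightarrow> 'a set set \<Rightarrow> bool" where
  "closed_ideal X P \<longleftrightarrow>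
     P \<noteq> {} \<and>
     (\<forall>A\<in>P. closedin X A) \<and>
     (\<forall>A\<in>P. \<forall>B\<in>P. A \<union> B \<in> P) \<and>
     (\<forall>A\<in>P. \<forall>B. closedin X B \<and> B \<subseteq> A \<longrightarrow> B \<in> P)"

definition CP :: "'a topology \<Rightarrow> 'a set set \<Rightarrow> ('a \<Rightarrow> real) set" where
  "CP X P = {f. X closure_of (discont_pts X f) \<in> P}"

definition CP_bounded :: "'a topology \<Rightarrow> 'a set set \<Rightarrow> ('a \<Rightarrow> real) set" where
  "CP_bounded X P = {f \<in> CP X P. \<exists>M. \<forall>x\<in>topspace X. \<bar>f x\<bar> \<le> M}"

definition zero_set :: "'a topology \<Rightarrow> ('a \<Rightarrow> real) \<Rightarrow> 'a set" where
  "zero_set X f = {x \<in> topspace X. f x = 0}"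

definition ZP :: "'a topology \<Rightarrow> 'a set set \<Rightarrow> 'a set set" where
  "ZP X P = zero_set X ` CP X P"

definition fip :: "'a topology \<Rightarrow> 'a set set \<Rightarrow> bool" where
  "fip X F \<longleftrightarrow> (\<forall>G. G \<subseteq> F \<and> finite G \<longrightarrow> topspace X \<inter> \<Inter>G \<noteq> {})"

definition tauP_compact :: "'a topology \<Rightarrow> 'a set set \<Rightarrow> bool" where
  "tauP_compact X P \<longleftrightarrow>
     (\<forall>F. F \<subseteq> ZP X P \<and> fip X F \<longrightarrow> topspace X \<inter> \<Inter>F \<noteq> {})"

definition tauP_pseudocompact :: "'a topology \<Rightarrow> 'a set set \<Rightarrow> bool" where
  "tauP_pseudocompact X P \<longleftrightarrow> CP X P = CP_bounded X P"

end

theory Submission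
  imports Defs
begin

text \<open>If f is unbounded, the sets where \<open>\<bar>f\<bar> \<ge> n\<close> are zero sets of the truncations
  \<open>max 0 (n - \<bar>f\<bar>)\<close>, which are discontinuous only where f is and hence lie in
  \<open>C(X)\<^sub>P\<close>. These zero sets are nonempty and decreasing, so they have the finite
  intersection property, but their intersection is empty: this contradicts
  \<open>\<tau>P\<close>-compactness.\<close>

lemma discont_pts_comp_continuous:
  fixes h :: "real \<Rightarrow> real"
  assumes "continuous_on UNIV h"
  shows "discont_pts X (\<lambda>x. h (f x)) \<subseteq> discont_pts X f"
proof
  fix x assume x: "x \<in> discont_pts X (\<lambda>x. h (f x))"
  show "x \<in> discont_pts X f"
  proof (rule ccontr)
    assume "x \<notin> discont_pts X f"
    with x have cont: "continuous_at_pt X f x"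
      by (auto simp: discont_pts_def)
    have "continuous_at_pt X (\<lambda>x. h (f x)) x"
      unfolding continuous_at_pt_def
    proof (intro allI impI)
      fix V assume V: "open V \<and> h (f x) \<in> V"
      then have "open (h -` V)" "f x \<in> h -` V"
        using assms open_vimage by auto
      then obtain U where "openin X U" "x \<in> U" "f ` U \<subseteq> h -` V"
        using cont unfolding continuous_at_pt_def by blast
      then show "\<exists>U. openin X U \<and> x \<in> U \<and> (\<lambda>x. h (f x)) ` U \<subseteq> V" by blast
    qed
    with x show False by (auto simp: discont_pts_def)
  qed
qed

lemma closed_ideal_downward:
  assumes "closed_ideal X P" "A \<in> P" "closedin X B" "B \<subseteq> A"
  shows "B \<in> P"
  using assms unfolding closed_ideal_def by blast

lemma CP_comp_continuous:
  fixes h :: "real \<Rightarrow> real"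
  assumes "closed_ideal X P" "f \<in> CP X P" "continuous_on UNIV h"
  shows "(\<lambda>x. h (f x)) \<in> CP X P"
proof -
  have "X closure_of discont_pts X (\<lambda>x. h (f x)) \<subseteq> X closure_of discont_pts X f"
    using discont_pts_comp_continuous[OF assms(3)] by (rule closure_of_mono)
  moreover have "X closure_of discont_pts X f \<in> P"
    using assms(2) by (simp add: CP_def)
  ultimately show ?thesis
    unfolding CP_def using closed_ideal_downward[OF assms(1)] closedin_closure_of by blast
qed

lemma abs_superlevel_set_in_ZP:
  assumes "closed_ideal X P" "f \<in> CP X P"
  shows "{x \<in> topspace X. r \<le> \<bar>f x\<bar>} \<in> ZP X P"
proof -
  have "zero_set X (\<lambda>x. max 0 (r - \<bar>f x\<bar>)) = {x \<in> topspace X. r \<le> \<bar>f x\<bar>}"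
    unfolding zero_set_def by (auto simp: max_def)
  moreover have "(\<lambda>x. max 0 (r - \<bar>f x\<bar>)) \<in> CP X P"
    by (rule CP_comp_continuous[OF assms]) (intro continuous_intros)
  ultimately show ?thesis
    unfolding ZP_def by (rule image_eqI[OF sym])
qed

lemma fip_abs_superlevel_sets:
  assumes "\<And>M. \<exists>x\<in>topspace X. M < \<bar>f x\<bar>"
  shows "fip X (range (\<lambda>n::nat. {x \<in> topspace X. real n \<le> \<bar>f x\<bar>}))"
  unfolding fip_def
proof (intro allI impI)
  fix G assume "G \<subseteq> range (\<lambda>n::nat. {x \<in> topspace X. real n \<le> \<bar>f x\<bar>}) \<and> finite G"
  then obtain I where I: "finite I" "G = (\<lambda>n. {x \<in> topspace X. real n \<le> \<bar>f x\<bar>}) ` I"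
    by (meson finite_subset_image)
  obtain x where x: "x \<in> topspace X" "real (Max (insert 0 I)) < \<bar>f x\<bar>"
    using assms by blast
  have "real n \<le> \<bar>f x\<bar>" if "n \<in> I" for n
  proof -
    have "n \<le> Max (insert 0 I)" using I(1) that by simp
    then show ?thesis using x(2) by (meson of_nat_le_iff order_less_imp_le order_trans)
  qed
  with x(1) have "x \<in> topspace X \<inter> \<Inter>G"
    unfolding I(2) by auto
  then show "topspace X \<inter> \<Inter>G \<noteq> {}" by blast
qed

lemma tauP_compact_imp_bounded:
  assumes "closed_ideal X P" "tauP_compact X P" "f \<in> CP X P"
  shows "\<exists>M. \<forall>x\<in>topspace X. \<bar>f x\<bar> \<le> M"
proof (rule ccontr)
  let ?F = "range (\<lambda>n::nat. {x \<in> topspace X. real n \<le> \<bar>f x\<bar>})"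
  assume "\<nexists>M. \<forall>x\<in>topspace X. \<bar>f x\<bar> \<le> M"
  then have "fip X ?F"
    by (intro fip_abs_superlevel_sets) (meson not_le)
  moreover have "?F \<subseteq> ZP X P"
    using abs_superlevel_set_in_ZP[OF assms(1,3)] by blast
  moreover have "?F \<subseteq> ZP X P \<and> fip X ?F \<longrightarrow> topspace X \<inter> \<Inter>?F \<noteq> {}"
    using assms(2) unfolding tauP_compact_def by (rule spec)
  ultimately obtain x where "\<And>n::nat. real n \<le> \<bar>f x\<bar>"
    by auto
  moreover obtain n :: nat where "\<bar>f x\<bar> < real n"
    using reals_Archimedean2 by blast
  ultimately show False
    by (meson not_le)
qed

theorem theorem4p2:
  fixes X :: "'a topology" and P :: "'a set set"
  assumes "t1_space X"
    and "closed_ideal X P"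
    and "tauP_compact X P"
  shows "tauP_pseudocompact X P"
  using tauP_compact_imp_bounded[OF assms(2,3)]
  by (auto simp: tauP_pseudocompact_def CP_bounded_def)

end
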